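(* Let $\eta^{(\varepsilon)}_n$, $\varepsilon\in(0,1]$, be Markov chains on $\mathbb{X}=\{1,\dots,N\}$ with transition probabilities $p_{ij}(\varepsilon)$ satisfying conditions A and D of the context for some $\varepsilon_0\in(0,1]$ and transition sets $\mathbb{Y}_i$. Then for every $r\in\mathbb{X}$ the non-absorption probability $\bar p_{rr}(\varepsilon)=1-p_{rr}(\varepsilon)$ admits a pivotal $(\bar l^-_{rr},\bar l^+_{rr})$-expansion $\bar p_{rr}(\varepsilon)=\sum_{l=\bar l^-_{rr}}^{\bar l^+_{rr}}\bar a_{rr}[l]\varepsilon^l+\bar o_{rr}(\varepsilon^{\bar l^+_{rr}})$, $\varepsilon\in(0,\varepsilon_0]$.
   Context: A $(h,k)$-expansion of $A$ on $(0,\varepsilon_0]$: $A(\varepsilon)=\sum_{l=h}^ka_l\varepsilon^l+o_A(\varepsilon^k)$ with integers $h\le k$, real $a_l$, $o_A(\varepsilon^k)/\varepsilon^k\to0$ as $\varepsilon\to0$; pivotal means $a_h\ne0$. For $\varepsilon\in(0,1]$, $\eta^{(\varepsilon)}_n$ is a homogeneous Markov chain on $\mathbb{X}$ with stochastic transition matrix $\|p_{ij}(\varepsilon)\|$. Condition A: there exist $\mathbb{Y}_i\subseteq\mathbb{X}$, $i\in\mathbb{X}$, and $\varepsilon_0\in(0,1]$ such that for $\varepsilon\in(0,\varepsilon_0]$: (a) $p_{ij}(\varepsilon)>0$ for $j\in\mathbb{Y}_i$; (b) $p_{ij}(\varepsilon)=0$ for $j\notin\mathbb{Y}_i$; (c)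 for every $i,j\in\mathbb{X}$ there exist $n\ge1$ and $i=l_0,\dots,l_n=j$ with $l_{k+1}\in\mathbb{Y}_{l_k}$. Condition D: for $j\in\mathbb{Y}_i$, $i\in\mathbb{X}$: $p_{ij}(\varepsilon)=\sum_{l=l^-_{ij}}^{l^+_{ij}}a_{ij}[l]\varepsilon^l+o_{ij}(\varepsilon^{l^+_{ij}})$, $\varepsilon\in(0,\varepsilon_0]$, with integers $0\le l^-_{ij}\le l^+_{ij}<\infty$, $a_{ij}[l^-_{ij}]>0$, $o_{ij}(\varepsilon^{l^+_{ij}})/\varepsilon^{l^+_{ij}}\to0$. *)

theory Defs
  imports Complex_Main
begin

definition has_expansion ::
  "(real \<Rightarrow> real) \<Rightarrow> real \<Rightarrow> int \<Rightarrow> int \<Rightarrow> (int \<Rightarrow> real) \<Rightarrow> bool" where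
  "has_expansion A eps0 h k a \<longleftrightarrow> h \<le> k \<and>
     (\<exists>oA :: real \<Rightarrow> real.
        (\<forall>e \<in> {0<..eps0}. A e = (\<Sum>l=h..k. a l * e powi l) + oA e) \<and>
        ((\<lambda>e. oA e / e powi k) \<longlongrightarrow> 0) (at_right 0))"

definition pivotal_expansion ::
  "(real \<Rightarrow> real) \<Rightarrow> real \<Rightarrow> int \<Rightarrow> int \<Rightarrow> (int \<Rightarrow> real) \<Rightarrow> bool" where
  "pivotal_expansion A eps0 h k a \<longleftrightarrow> has_expansion A eps0 h k a \<and> a h \<noteq> 0"

definition stochastic_family :: "nat \<Rightarrow> (real \<Rightarrow> nat \<Rightarrow> nat \<Rightarrow> real) \<Rightarrow> bool" where
  "stochastic_family N p \<longleftrightarrow>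
     (\<forall>e \<in> {0<..1}. \<forall>i \<in> {1..N}.
        (\<forall>j \<in> {1..N}. 0 \<le> p e i j) \<and> (\<Sum>j\<in>{1..N}. p e i j) = 1)"

definition condition_A ::
  "nat \<Rightarrow> (real \<Rightarrow> nat \<Rightarrow> nat \<Rightarrow> real) \<Rightarrow> (nat \<Rightarrow> nat set) \<Rightarrow> real \<Rightarrow> bool" where
  "condition_A N p Y eps0 \<longleftrightarrow> 0 < eps0 \<and> eps0 \<le> 1 \<and>
     (\<forall>i \<in> {1..N}. Y i \<subseteq> {1..N}) \<and>
     (\<forall>e \<in> {0<..eps0}. \<forall>i \<in> {1..N}. \<forall>j \<in> {1..N}.
        (j \<in> Y i \<longrightarrow> p e i j > 0) \<and> (j \<notin> Y i \<longrightarrow> p e i j = 0)) \<and>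
     (\<forall>i \<in> {1..N}. \<forall>j \<in> {1..N}. \<exists>n \<ge> 1. \<exists>l :: nat \<Rightarrow> nat.
        l 0 = i \<and> l n = j \<and> (\<forall>k < n. l (Suc k) \<in> Y (l k)))"

definition condition_D ::
  "nat \<Rightarrow> (real \<Rightarrow> nat \<Rightarrow> nat \<Rightarrow> real) \<Rightarrow> (nat \<Rightarrow> nat set) \<Rightarrow> real \<Rightarrow> bool" where
  "condition_D N p Y eps0 \<longleftrightarrow>
     (\<forall>i \<in> {1..N}. \<forall>j \<in> Y i. \<exists>lm lp a.
        0 \<le> lm \<and> has_expansion (\<lambda>e. p e i j) eps0 lm lp a \<and> a lm > 0)"

end

theory Submission
  imports Defs
begin

text \<open>Off the diagonal, row r of the transition matrix is supported on the exits
  Y r - {r}, so 1 - p e r r is a finite sum of transition probabilities, each with a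
  pivotal expansion whose leading coefficient is positive. Dividing by e^m, where m is
  the least leading order, every term tends to its leading coefficient or to 0, so the sum
  tends to a positive constant c: this is a pivotal (m,m)-expansion with coefficient c.
  The exit set is nonempty because, by communication (condition A (c)) and N \<ge> 2, some
  path leaves r.\<close>

lemma tendsto_powi_at_right_0:
  assumes "0 \<le> n"
  shows "((\<lambda>e::real. e powi n) \<longlongrightarrow> (if n = 0 then 1 else 0)) (at_right 0)"
proof -
  obtain m where n: "n = int m" using assms nonneg_eq_int by blast
  have "((\<lambda>e::real. e ^ m) \<longlongrightarrow> 0 ^ m) (at_right 0)"
    by (intro tendsto_intros)
  then show ?thesis using n by (simp add: power_int_of_nat)
qed

lemma tendsto_divide_powi_lower:
  assumes lim: "((\<lambda>e. A e / e powi h) \<longlongrightarrow> a) (at_right (0::real))" and "m \<le> h"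
  shows "((\<lambda>e. A e / e powi m) \<longlongrightarrow> (if h = m then a else 0)) (at_right 0)"
proof -
  have "((\<lambda>e. A e / e powi h * e powi (h - m)) \<longlongrightarrow> a * (if h - m = 0 then 1 else 0))
      (at_right 0)"
    using \<open>m \<le> h\<close> by (intro tendsto_mult lim tendsto_powi_at_right_0) simp
  moreover have "\<forall>\<^sub>F e in at_right 0. A e / e powi h * e powi (h - m) = A e / e powi m"
    by (rule eventually_at_rightI[of 0 1]) (auto simp: power_int_diff)
  ultimately show ?thesis
    using Lim_transform_eventually by fastforce
qed

lemma has_expansion_tendsto_leading:
  assumes "has_expansion A eps0 h k a" "0 < eps0"
  shows "((\<lambda>e. A e / e powi h) \<longlongrightarrow> a h) (at_right 0)"
proof -
  obtain oA where "h \<le> k"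
    and A: "\<And>e. e \<in> {0<..eps0} \<Longrightarrow> A e = (\<Sum>l=h..k. a l * e powi l) + oA e"
    and lim: "((\<lambda>e. oA e / e powi k) \<longlongrightarrow> 0) (at_right 0)"
    using assms(1) unfolding has_expansion_def by blast
  have "((\<lambda>e. \<Sum>l=h..k. a l * e powi (l - h))
      \<longlongrightarrow> (\<Sum>l=h..k. a l * (if l - h = 0 then 1 else 0))) (at_right 0)"
    by (intro tendsto_intros tendsto_powi_at_right_0) auto
  moreover have "(\<Sum>l=h..k. a l * (if l - h = 0 then 1 else 0)) = a h"
    using \<open>h \<le> k\<close> by (simp add: sum.delta if_distrib cong: if_cong)
  moreover have "((\<lambda>e. oA e / e powi h) \<longlongrightarrow> 0) (at_right 0)"
    using tendsto_divide_powi_lower[OF lim \<open>h \<le> k\<close>] by simp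
  ultimately have "((\<lambda>e. (\<Sum>l=h..k. a l * e powi (l - h)) + oA e / e powi h) \<longlongrightarrow> a h)
      (at_right 0)"
    using tendsto_add by fastforce
  moreover have "\<forall>\<^sub>F e in at_right 0.
      (\<Sum>l=h..k. a l * e powi (l - h)) + oA e / e powi h = A e / e powi h"
    by (rule eventually_at_rightI[OF _ assms(2)])
      (simp add: A add_divide_distrib sum_divide_distrib power_int_diff)
  ultimately show ?thesis by (simp add: tendsto_cong)
qed

lemma has_expansion_of_tendsto:
  assumes "((\<lambda>e. A e / e powi m) \<longlongrightarrow> c) (at_right 0)"
  shows "has_expansion A eps0 m m (\<lambda>_. c)"
proof -
  have "((\<lambda>e. A e / e powi m - c) \<longlongrightarrow> 0) (at_right 0)"
    using tendsto_diff[OF assms tendsto_const[of c]] by simp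
  moreover have "\<forall>\<^sub>F e in at_right 0. A e / e powi m - c = (A e - c * e powi m) / e powi m"
    by (rule eventually_at_rightI[of 0 1]) (simp_all add: diff_divide_distrib)
  ultimately have "((\<lambda>e. (A e - c * e powi m) / e powi m) \<longlongrightarrow> 0) (at_right 0)"
    by (simp add: tendsto_cong)
  then show ?thesis
    unfolding has_expansion_def by (intro conjI exI[of _ "\<lambda>e. A e - c * e powi m"]) auto
qed

lemma pivotal_expansion_sum_positive_leading:
  assumes "finite S" "S \<noteq> {}" "0 < eps0"
    and exp: "\<And>j. j \<in> S \<Longrightarrow> has_expansion (f j) eps0 (h j) (k j) (a j)"
    and pos: "\<And>j. j \<in> S \<Longrightarrow> 0 < a j (h j)"
  shows "pivotal_expansion (\<lambda>e. \<Sum>j\<in>S. f j e) eps0 (Min (h ` S)) (Min (h ` S))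
           (\<lambda>_. \<Sum>j\<in>S. if h j = Min (h ` S) then a j (h j) else 0)"
    (is "pivotal_expansion _ _ ?m ?m (\<lambda>_. \<Sum>j\<in>S. ?b j)")
proof -
  have "((\<lambda>e. f j e / e powi ?m) \<longlongrightarrow> ?b j) (at_right 0)" if "j \<in> S" for j
  proof (rule tendsto_divide_powi_lower)
    show "((\<lambda>e. f j e / e powi h j) \<longlongrightarrow> a j (h j)) (at_right 0)"
      using has_expansion_tendsto_leading[OF exp[OF that] \<open>0 < eps0\<close>] .
    show "?m \<le> h j"
      using \<open>finite S\<close> that by simp
  qed
  then have "((\<lambda>e. (\<Sum>j\<in>S. f j e) / e powi ?m) \<longlongrightarrow> (\<Sum>j\<in>S. ?b j)) (at_right 0)"
    unfolding sum_divide_distrib by (rule tendsto_sum)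
  moreover have "0 < (\<Sum>j\<in>S. ?b j)"
  proof -
    have "?m \<in> h ` S"
      using \<open>finite S\<close> \<open>S \<noteq> {}\<close> by (intro Min_in) auto
    then obtain j0 where j0: "j0 \<in> S" "h j0 = ?m" by (metis imageE)
    have "0 \<le> ?b j" if "j \<in> S" for j
      using less_imp_le[OF pos[OF that]] by auto
    then have "?b j0 \<le> (\<Sum>j\<in>S. ?b j)"
      using \<open>finite S\<close> j0(1) by (intro member_le_sum) auto
    then show ?thesis
      using pos[OF j0(1)] j0(2) by simp
  qed
  ultimately show ?thesis
    unfolding pivotal_expansion_def by (simp add: has_expansion_of_tendsto)
qed

lemma pivotal_expansion_cong:
  assumes "pivotal_expansion A eps0 h k a" "\<And>e. e \<in> {0<..eps0} \<Longrightarrow> A e = B e"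
  shows "pivotal_expansion B eps0 h k a"
  using assms unfolding pivotal_expansion_def has_expansion_def by auto

lemma path_exits_start:
  assumes "l 0 = r" "l n \<noteq> r" "\<forall>k<n. l (Suc k) \<in> Y (l k)"
  shows "Y r - {r} \<noteq> {}"
proof
  assume stuck: "Y r - {r} = {}"
  have "l k = r" if "k \<le> n" for k
    using that
  proof (induction k)
    case (Suc k)
    then have "l (Suc k) \<in> Y r" using assms(3) by auto
    with stuck show ?case by blast
  qed (use assms(1) in simp)
  with assms(2) show False by simp
qed

lemma one_minus_diagonal_eq_sum_exits:
  fixes r N :: nat and P :: "nat \<Rightarrow> 'a::ring_1"
  assumes "r \<in> {1..N}" "E \<subseteq> {1..N}" "(\<Sum>j\<in>{1..N}. P j) = 1"
    and "\<And>j. j \<in> {1..N} \<Longrightarrow> j \<notin> E \<Longrightarrow> P j = 0"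
  shows "1 - P r = (\<Sum>j\<in>E - {r}. P j)"
proof -
  have "(\<Sum>j\<in>{1..N}. P j) = P r + (\<Sum>j\<in>{1..N} - {r}. P j)"
    using assms(1) by (intro sum.remove) auto
  also have "(\<Sum>j\<in>{1..N} - {r}. P j) = (\<Sum>j\<in>E - {r}. P j)"
    using assms(2) by (intro sum.mono_neutral_right) (auto intro: assms(4))
  finally show ?thesis using assms(3) by (metis add_diff_cancel_left')
qed

lemma condition_A_exits_nonempty:
  assumes "2 \<le> N" "condition_A N p Y eps0" "r \<in> {1..N}"
  shows "Y r - {r} \<noteq> {}"
proof -
  obtain j where j: "j \<in> {1..N}" "j \<noteq> r"
    using assms(1,3) by (cases "r = 1") (auto intro: that[of 1] that[of 2])
  then obtain n l where "l 0 = r" "l n = j" "\<forall>k<n. l (Suc k) \<in> Y (l k)"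
    using assms(2,3) unfolding condition_A_def by blast
  with j(2) show ?thesis
    by (intro path_exits_start) simp_all
qed

lemma condition_A_one_minus_diagonal:
  assumes "stochastic_family N p" "condition_A N p Y eps0" "r \<in> {1..N}" "e \<in> {0<..eps0}"
  shows "1 - p e r r = (\<Sum>j\<in>Y r - {r}. p e r j)"
proof (rule one_minus_diagonal_eq_sum_exits)
  note A = assms(2)[unfolded condition_A_def]
  show "Y r \<subseteq> {1..N}"
    using A assms(3) by simp
  show "(\<Sum>j\<in>{1..N}. p e r j) = 1"
    using A assms(1,3,4) unfolding stochastic_family_def by simp
  show "p e r j = 0" if "j \<in> {1..N}" "j \<notin> Y r" for j
    using A assms(3,4) that by simp
qed (use assms(3) in simp)

theorem lemma8:
  fixes N :: nat and p :: "real \<Rightarrow> nat \<Rightarrow> nat \<Rightarrow> real"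
    and Y :: "nat \<Rightarrow> nat set" and eps0 :: real
  assumes "2 \<le> N"
    and "stochastic_family N p"
    and "condition_A N p Y eps0"
    and "condition_D N p Y eps0"
  shows "\<forall>r \<in> {1..N}. \<exists>lm lp a.
           pivotal_expansion (\<lambda>e. 1 - p e r r) eps0 lm lp a"
proof
  fix r assume r: "r \<in> {1..N}"
  have "0 < eps0" and "Y r \<subseteq> {1..N}"
    using assms(3) r unfolding condition_A_def by auto
  then have "finite (Y r - {r})"
    using finite_subset by blast
  have "\<forall>j\<in>Y r. \<exists>lm lp a. has_expansion (\<lambda>e. p e r j) eps0 lm lp a \<and> 0 < a lm"
    using assms(4) r unfolding condition_D_def by blast
  then obtain lm lp a where "\<And>j. j \<in> Y r \<Longrightarrow>
      has_expansion (\<lambda>e. p e r j) eps0 (lm j) (lp j) (a j) \<and> 0 < a j (lm j)"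
    by metis
  then have "pivotal_expansion (\<lambda>e. \<Sum>j\<in>Y r - {r}. p e r j) eps0 (Min (lm ` (Y r - {r})))
      (Min (lm ` (Y r - {r}))) (\<lambda>_. \<Sum>j\<in>Y r - {r}. if lm j = Min (lm ` (Y r - {r})) then a j (lm j) else 0)"
    using \<open>finite (Y r - {r})\<close> condition_A_exits_nonempty[OF assms(1,3) r] \<open>0 < eps0\<close>
    by (intro pivotal_expansion_sum_positive_leading) auto
  then have "pivotal_expansion (\<lambda>e. 1 - p e r r) eps0 (Min (lm ` (Y r - {r})))
      (Min (lm ` (Y r - {r}))) (\<lambda>_. \<Sum>j\<in>Y r - {r}. if lm j = Min (lm ` (Y r - {r})) then a j (lm j) else 0)"
    by (rule pivotal_expansion_cong) (simp add: condition_A_one_minus_diagonal[OF assms(2,3) r])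
  then show "\<exists>lm lp a. pivotal_expansion (\<lambda>e. 1 - p e r r) eps0 lm lp a"
    by blast
qed

end
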